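(* Let $n\in\mathbb{N}_0$, $k\in\mathbb{N}$ and $\lambda\in\mathbb{C}\setminus\{0\}$. Then $$E_{n}^{\ast(-k)}(\lambda)=\frac{k!\,2^{n-k}}{\lambda^{k}}\,y_{3}\!\left(n,k;\lambda^{2};\frac12,-\frac12\right).$$
   Context: For $k\in\mathbb{N}_0$ and $\lambda\ne0$, the second kind Apostol type Euler numbers of order $-k$ are defined by $$\left(\frac{\lambda e^{t}+\lambda^{-1}e^{-t}}{2}\right)^{k}=\sum_{n=0}^{\infty}E_{n}^{\ast(-k)}(\lambda)\frac{t^{n}}{n!}.$$ For $a,b\in\mathbb{R}$, $\mu\in\mathbb{C}$, $k\in\mathbb{N}_0$, the numbers $y_3(n,k;\mu;a,b)$ are defined by $\frac{e^{bkt}}{k!}(\mu e^{(a-b)t}+1)^{k}=\sum_{n\ge0}y_{3}(n,k;\mu;a,b)\frac{t^{n}}{n!}$. *)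

theory Defs
  imports "HOL-Analysis.Analysis" "HOL-Computational_Algebra.Formal_Power_Series"
begin

text \<open>Generating functions are treated as formal power series in t;
 e^{c t} is fps_exp c.\<close>

definition apostol_euler2_neg :: "nat \<Rightarrow> nat \<Rightarrow> complex \<Rightarrow> complex" where
  "apostol_euler2_neg n k lam =
     fact n * fps_nth
       (((fps_const lam * fps_exp 1 + fps_const (inverse lam) * fps_exp (-1)) / fps_const 2) ^ k) n"

definition y3 :: "nat \<Rightarrow> nat \<Rightarrow> complex \<Rightarrow> real \<Rightarrow> real \<Rightarrow> complex" where
  "y3 n k \<mu> a b =
     fact n * fps_nth
       (fps_const (1 / fact k) * fps_exp (complex_of_real (b * real k))
          * (fps_const \<mu> * fps_exp (complex_of_real (a - b)) + 1) ^ k) n"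

end

theory Submission
  imports Defs
begin

text \<open>Factoring out \<open>\<lambda>\<^sup>-\<^sup>1 e\<^sup>-\<^sup>t\<close> gives
  \<open>(\<lambda>e\<^sup>t + \<lambda>\<^sup>-\<^sup>1e\<^sup>-\<^sup>t)/2 = (2\<lambda>)\<^sup>-\<^sup>1 e\<^sup>-\<^sup>t (\<lambda>\<^sup>2e\<^sup>2\<^sup>t + 1)\<close>,
  so the \<open>k\<close>-th power is \<open>k!/(2\<lambda>)\<^sup>k\<close> times the generating function of
  \<open>y\<^sub>3(n,k;\<lambda>\<^sup>2;1,-1)\<close>. Substituting \<open>t \<mapsto> 2t\<close> turns the parameters \<open>(1/2,-1/2)\<close>
  into \<open>(1,-1)\<close> and multiplies the \<open>n\<close>-th coefficient by \<open>2\<^sup>n\<close>.\<close>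

lemma fps_exp_sum_factor:
  fixes lam a :: "'a :: field_char_0"
  assumes "lam \<noteq> 0"
  shows "fps_const lam * fps_exp a + fps_const (inverse lam) * fps_exp (-a)
       = fps_const (inverse lam) * fps_exp (-a) * (fps_const (lam^2) * fps_exp (2*a) + 1)"
proof -
  have "fps_exp (-a) * fps_exp (2*a) = fps_exp a"
    by (simp flip: fps_exp_add_mult)
  moreover have "fps_const (inverse lam) * fps_const (lam^2) = fps_const lam"
    using assms by (simp add: power2_eq_square flip: fps_const_mult)
  ultimately show ?thesis
    by (simp add: algebra_simps)
qed

lemma y3_dilate:
  "y3 n k \<mu> (c*a) (c*b) = of_real c ^ n * y3 n k \<mu> a b"
proof -
  let ?G = "fps_const (1 / fact k) * fps_exp (complex_of_real (b * real k))
              * (fps_const \<mu> * fps_exp (complex_of_real (a - b)) + 1) ^ k"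
  have X0: "fps_nth (fps_const (of_real c) * fps_X :: complex fps) 0 = 0"
    by simp
  have "?G oo (fps_const (of_real c) * fps_X)
      = fps_const (1 / fact k) * fps_exp (complex_of_real (c*b * real k))
          * (fps_const \<mu> * fps_exp (complex_of_real (c*a - c*b)) + 1) ^ k"
    by (simp add: fps_compose_mult_distrib[OF X0] fps_compose_add_distrib
        flip: fps_compose_power[OF X0]) (simp add: algebra_simps)
  then show ?thesis
    unfolding y3_def by (metis fps_nth_compose_linear mult.left_commute)
qed

lemma apostol_euler2_neg_eq_y3:
  assumes "lam \<noteq> 0"
  shows "apostol_euler2_neg n k lam = fact k / (2*lam)^k * y3 n k (lam^2) 1 (-1)"
proof -
  have "(fps_const lam * fps_exp 1 + fps_const (inverse lam) * fps_exp (-1)) / fps_const 2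
      = fps_const (inverse (2*lam)) * (fps_exp (-1) * (fps_const (lam^2) * fps_exp 2 + 1))"
    unfolding fps_exp_sum_factor[OF assms, of 1]
    by (simp add: divide_fps_const mult.assoc mult.commute flip: fps_const_mult)
  then have "((fps_const lam * fps_exp 1 + fps_const (inverse lam) * fps_exp (-1)) / fps_const 2) ^ k
      = fps_const (inverse (2*lam) ^ k) * (fps_exp (-1) ^ k * (fps_const (lam^2) * fps_exp 2 + 1) ^ k)"
    by (simp only: power_mult_distrib fps_const_power)
  also have "\<dots> = fps_const (fact k / (2*lam)^k) * (fps_const (1 / fact k)
      * fps_exp (complex_of_real (-1 * real k)) * (fps_const (lam^2) * fps_exp (complex_of_real (1 - -1)) + 1) ^ k)"
    by (simp add: fps_exp_power_mult inverse_eq_divide power_divide flip: fps_const_mult)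
  finally show ?thesis
    unfolding apostol_euler2_neg_def y3_def by (simp only: fps_mult_left_const_nth) (simp add: ac_simps)
qed

theorem mainTheorem7:
  fixes n k :: nat and lam :: complex
  assumes "k \<ge> 1" and "lam \<noteq> 0"
  shows "apostol_euler2_neg n k lam =
    fact k * 2 powi (int n - int k) / lam ^ k * y3 n k (lam^2) (1/2) (-1/2)"
proof -
  have "y3 n k (lam^2) 1 (-1) = 2 ^ n * y3 n k (lam^2) (1/2) (-1/2)"
    using y3_dilate[of n k "lam^2" 2 "1/2" "-1/2"] by simp
  moreover have "(2::complex) powi (int n - int k) = 2 ^ n / 2 ^ k"
    by (simp add: power_int_diff)
  ultimately show ?thesis
    using apostol_euler2_neg_eq_y3[OF assms(2)] by (simp add: power_mult_distrib)
qed

end
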